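(* Let $D=(V,A)$ be a directed graph and let $R_D$ be an inclusion-wise minimal bad set of $D$. Let $D'=(V',A')$ where $V'=V\cup\{r_1,r_2\}$ with $r_1,r_2$ new vertices and $A'=A\cup\{(r_1,r_2)\}\cup\{(v,r_1),(r_2,v)\mid v\in R_D\}$. Then $n(D')=n(D)+2$, $f(D')=f(D)+1$, and $\{r_1,r_2\}$ is an inclusion-wise minimal bad set of $D'$.
   Context: Directed graphs are oriented graphs: finite, no loops, no multiple arcs and no pair of antiparallel arcs. $n(H)$ is the number of vertices and $f(H)$ is the minimum size of a set $F\subseteq V(H)$ such that $H-F$ contains no directed cycle. A set $R\subseteq V(H)$ is bad if it is not contained in any minimum feedback vertex set of $H$; it is an inclusion-wise minimal bad set if no proper subset of it is bad. *)

theory Defs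
  imports Main
begin

definition oriented_graph :: "'a set \<Rightarrow> ('a \<times> 'a) set \<Rightarrow> bool" where
  "oriented_graph V A \<longleftrightarrow> finite V \<and> A \<subseteq> V \<times> V \<and> (\<forall>v. (v, v) \<notin> A)
     \<and> (\<forall>u v. (u, v) \<in> A \<longrightarrow> (v, u) \<notin> A)"

definition nv :: "'a set \<Rightarrow> ('a \<times> 'a) set \<Rightarrow> nat" where
  "nv V A = card V"

definition del_arcs :: "('a \<times> 'a) set \<Rightarrow> 'a set \<Rightarrow> ('a \<times> 'a) set" where
  "del_arcs A F = {(u, v). (u, v) \<in> A \<and> u \<notin> F \<and> v \<notin> F}"

definition is_fvs :: "'a set \<Rightarrow> ('a \<times> 'a) set \<Rightarrow> 'a set \<Rightarrow> bool" where
  "is_fvs V A F \<longleftrightarrow> F \<subseteq> V \<and> acyclic (del_arcs A F)"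

definition fvn :: "'a set \<Rightarrow> ('a \<times> 'a) set \<Rightarrow> nat" where
  "fvn V A = (LEAST k. \<exists>F. is_fvs V A F \<and> card F = k)"

definition is_min_fvs :: "'a set \<Rightarrow> ('a \<times> 'a) set \<Rightarrow> 'a set \<Rightarrow> bool" where
  "is_min_fvs V A F \<longleftrightarrow> is_fvs V A F \<and> card F = fvn V A"

definition bad_set :: "'a set \<Rightarrow> ('a \<times> 'a) set \<Rightarrow> 'a set \<Rightarrow> bool" where
  "bad_set V A R \<longleftrightarrow> R \<subseteq> V \<and> (\<forall>F. is_min_fvs V A F \<longrightarrow> \<not> R \<subseteq> F)"

definition minimal_bad_set :: "'a set \<Rightarrow> ('a \<times> 'a) set \<Rightarrow> 'a set \<Rightarrow> bool" where
  "minimal_bad_set V A R \<longleftrightarrow> bad_set V A R \<and> (\<forall>S. S \<subset> R \<longrightarrow> \<not> bad_set V A S)"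

end

theory Submission
  imports Defs
begin

text \<open>Every cycle of D' that avoids both r1 and r2 lies in D, and every cycle through r1 or r2
  uses the path r1 \<rightarrow> r2 \<rightarrow> v \<rightarrow> r1 with v \<in> R. Hence adding r1 (or r2) to a feedback vertex
  set of D gives one of D', while a feedback vertex set of D' avoiding r1 and r2 contains R and
  is one of D, so it cannot be minimum because R is bad. Thus f(D') = f(D) + 1, the sets F + r1
  and F + r2 for a minimum F of D are minimum for D', and no minimum set of D' contains both
  r1 and r2, since its trace on V would be a feedback vertex set of D of size f(D) - 1.\<close>

lemma acyclic_extend_by_source:
  assumes "acyclic B" and "E \<subseteq> B \<union> {r} \<times> UNIV" and "r \<notin> Range E"
  shows "acyclic E"
proof -
  have path_in_B: "(x, y) \<in> B\<^sup>+ \<or> x = r" if "(x, y) \<in> E\<^sup>+" for x y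
    using that
  proof (induction rule: trancl_induct)
    case (base y)
    then show ?case using assms(2) by blast
  next
    case (step y z)
    have "y \<noteq> r" using step(1) assms(3) by (metis Range.intros Range_snd trancl_range)
    then have "(y, z) \<in> B" using assms(2) step(2) by blast
    then show ?case using step(3) by (meson trancl_into_trancl)
  qed
  show ?thesis
    unfolding acyclic_def
  proof (intro allI notI)
    fix x
    assume cycle: "(x, x) \<in> E\<^sup>+"
    then have "x \<noteq> r" using assms(3) by (metis Range.intros Range_snd trancl_range)
    with path_in_B[OF cycle] assms(1) show False unfolding acyclic_def by blast
  qed
qed

lemma acyclic_extend_by_sink:
  assumes "acyclic B" and "E \<subseteq> B \<union> UNIV \<times> {r}" and "r \<notin> Domain E"
  shows "acyclic E"
proof -
  have "acyclic (E\<inverse>)"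
    by (rule acyclic_extend_by_source[of "B\<inverse>" _ r]) (use assms in \<open>auto simp: acyclic_converse\<close>)
  then show ?thesis by (simp add: acyclic_converse)
qed

lemma is_fvs_whole: "A \<subseteq> V \<times> V \<Longrightarrow> is_fvs V A V"
  unfolding is_fvs_def del_arcs_def acyclic_def by (auto dest: tranclD)

lemma fvn_le_card: "is_fvs V A F \<Longrightarrow> fvn V A \<le> card F"
  unfolding fvn_def by (intro Least_le) blast

lemma ex_min_fvs:
  assumes "is_fvs V A F"
  obtains G where "is_min_fvs V A G"
proof -
  have "\<exists>G. is_fvs V A G \<and> card G = fvn V A"
    unfolding fvn_def by (rule LeastI_ex) (use assms in blast)
  then show ?thesis using that unfolding is_min_fvs_def by blast
qed

lemma fvn_eqI:
  assumes "is_fvs V A F" and "\<And>G. is_fvs V A G \<Longrightarrow> k \<le> card G" and "card F = k"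
  shows "fvn V A = k"
proof -
  obtain G where "is_min_fvs V A G" using ex_min_fvs[OF assms(1)] .
  then have "k \<le> fvn V A" using assms(2) unfolding is_min_fvs_def by metis
  moreover have "fvn V A \<le> k" using fvn_le_card[OF assms(1)] assms(3) by simp
  ultimately show ?thesis by simp
qed

lemma finite_fvs: "finite V \<Longrightarrow> is_fvs V A F \<Longrightarrow> finite F"
  unfolding is_fvs_def using finite_subset by blast

lemma card_insert_fvs:
  assumes "finite V" and "is_fvs V A F" and "r \<notin> V"
  shows "card (insert r F) = card F + 1"
proof -
  have "finite F" using finite_fvs assms(1,2) .
  moreover have "r \<notin> F" using assms(2,3) unfolding is_fvs_def by blast
  ultimately show ?thesis by simp
qed

definition gadget_arcs :: "('a \<times> 'a) set \<Rightarrow> 'a set \<Rightarrow> 'a \<Rightarrow> 'a \<Rightarrow> ('a \<times> 'a) set" where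
  "gadget_arcs A R r1 r2 = A \<union> {(r1, r2)} \<union> {(v, r1) | v. v \<in> R} \<union> {(r2, v) | v. v \<in> R}"

locale gadget =
  fixes V :: "'a set" and A :: "('a \<times> 'a) set" and R :: "'a set" and r1 r2 :: 'a
  assumes finite_V: "finite V" and arcs_in_V: "A \<subseteq> V \<times> V" and R_in_V: "R \<subseteq> V"
    and r1_notin_V: "r1 \<notin> V" and r2_notin_V: "r2 \<notin> V" and r1_neq_r2: "r1 \<noteq> r2"
begin

abbreviation V' :: "'a set" where "V' \<equiv> V \<union> {r1, r2}"

abbreviation A' :: "('a \<times> 'a) set" where "A' \<equiv> gadget_arcs A R r1 r2"

lemma is_fvs_restrict: "is_fvs V' A' F \<Longrightarrow> is_fvs V A (F \<inter> V)"
proof -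
  have "del_arcs A (F \<inter> V) \<subseteq> del_arcs A' F"
    using arcs_in_V unfolding del_arcs_def gadget_arcs_def by auto
  then show "is_fvs V' A' F \<Longrightarrow> is_fvs V A (F \<inter> V)"
    unfolding is_fvs_def using acyclic_subset by blast
qed

lemma is_fvs_insert_r1: "is_fvs V A F \<Longrightarrow> is_fvs V' A' (insert r1 F)"
proof -
  assume F: "is_fvs V A F"
  have "acyclic (del_arcs A' (insert r1 F))"
  proof (rule acyclic_extend_by_source[of "del_arcs A F" _ r2])
    show "acyclic (del_arcs A F)" using F unfolding is_fvs_def by blast
    show "del_arcs A' (insert r1 F) \<subseteq> del_arcs A F \<union> {r2} \<times> UNIV"
      unfolding del_arcs_def gadget_arcs_def by auto
    show "r2 \<notin> Range (del_arcs A' (insert r1 F))"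
      using arcs_in_V R_in_V r2_notin_V r1_neq_r2 unfolding del_arcs_def gadget_arcs_def by auto
  qed
  then show ?thesis using F unfolding is_fvs_def by auto
qed

lemma is_fvs_insert_r2: "is_fvs V A F \<Longrightarrow> is_fvs V' A' (insert r2 F)"
proof -
  assume F: "is_fvs V A F"
  have "acyclic (del_arcs A' (insert r2 F))"
  proof (rule acyclic_extend_by_sink[of "del_arcs A F" _ r1])
    show "acyclic (del_arcs A F)" using F unfolding is_fvs_def by blast
    show "del_arcs A' (insert r2 F) \<subseteq> del_arcs A F \<union> UNIV \<times> {r1}"
      unfolding del_arcs_def gadget_arcs_def by auto
    show "r1 \<notin> Domain (del_arcs A' (insert r2 F))"
      using arcs_in_V R_in_V r1_notin_V r1_neq_r2 unfolding del_arcs_def gadget_arcs_def by auto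
  qed
  then show ?thesis using F unfolding is_fvs_def by auto
qed

lemma fvs_avoiding_r1_r2_contains_R:
  assumes "is_fvs V' A' F" and "r1 \<notin> F" and "r2 \<notin> F"
  shows "R \<subseteq> F"
proof
  fix v
  assume "v \<in> R"
  show "v \<in> F"
  proof (rule ccontr)
    assume "v \<notin> F"
    then have "(r1, r2) \<in> del_arcs A' F" "(r2, v) \<in> del_arcs A' F" "(v, r1) \<in> del_arcs A' F"
      using assms(2,3) \<open>v \<in> R\<close> unfolding del_arcs_def gadget_arcs_def by auto
    then have "(r1, r1) \<in> (del_arcs A' F)\<^sup>+" by (meson r_into_trancl trancl_into_trancl)
    then show False using assms(1) unfolding is_fvs_def acyclic_def by blast
  qed
qed

lemma card_fvs_gadget_ge:
  assumes bad: "bad_set V A R" and F: "is_fvs V' A' F"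
  shows "fvn V A + 1 \<le> card F"
proof (cases "r1 \<in> F \<or> r2 \<in> F")
  case True
  have "finite F" using finite_fvs[OF _ F] finite_V by blast
  moreover have "F \<inter> V \<subset> F" using True r1_notin_V r2_notin_V by blast
  ultimately have "card (F \<inter> V) < card F" by (rule psubset_card_mono)
  moreover have "fvn V A \<le> card (F \<inter> V)" using fvn_le_card[OF is_fvs_restrict[OF F]] .
  ultimately show ?thesis by linarith
next
  case False
  then have "F \<inter> V = F" using F unfolding is_fvs_def by blast
  then have F_in_D: "is_fvs V A F" using is_fvs_restrict[OF F] by simp
  have "R \<subseteq> F" using fvs_avoiding_r1_r2_contains_R F False by blast
  then have "\<not> is_min_fvs V A F" using bad unfolding bad_set_def by blast
  then show ?thesis using F_in_D fvn_le_card[OF F_in_D] unfolding is_min_fvs_def by simp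
qed

lemma fvn_gadget:
  assumes "bad_set V A R"
  shows "fvn V' A' = fvn V A + 1"
proof -
  obtain F where F: "is_min_fvs V A F" using ex_min_fvs[OF is_fvs_whole[OF arcs_in_V]] .
  then have "card (insert r1 F) = fvn V A + 1"
    using card_insert_fvs[OF finite_V _ r1_notin_V] unfolding is_min_fvs_def by auto
  then show ?thesis
    using fvn_eqI is_fvs_insert_r1 card_fvs_gadget_ge[OF assms] F unfolding is_min_fvs_def
    by metis
qed

lemma min_fvs_insert_r1:
  assumes "bad_set V A R" and "is_min_fvs V A F"
  shows "is_min_fvs V' A' (insert r1 F)"
  using assms is_fvs_insert_r1 fvn_gadget card_insert_fvs[OF finite_V _ r1_notin_V]
  unfolding is_min_fvs_def by auto

lemma min_fvs_insert_r2:
  assumes "bad_set V A R" and "is_min_fvs V A F"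
  shows "is_min_fvs V' A' (insert r2 F)"
  using assms is_fvs_insert_r2 fvn_gadget card_insert_fvs[OF finite_V _ r2_notin_V]
  unfolding is_min_fvs_def by auto

lemma bad_set_r1_r2:
  assumes "bad_set V A R"
  shows "bad_set V' A' {r1, r2}"
  unfolding bad_set_def
proof (intro conjI allI impI notI)
  show "{r1, r2} \<subseteq> V'" by blast
next
  fix F
  assume min: "is_min_fvs V' A' F" and r12: "{r1, r2} \<subseteq> F"
  then have F: "is_fvs V' A' F" and card_F: "card F = fvn V A + 1"
    using fvn_gadget[OF assms] unfolding is_min_fvs_def by auto
  have "F = insert r1 (insert r2 (F \<inter> V))" using F r12 unfolding is_fvs_def by blast
  then have "card F = card (F \<inter> V) + 2"
    using finite_V r1_notin_V r2_notin_V r1_neq_r2 by (metis Int_iff card_insert_disjoint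
        finite_Int finite_insert insert_iff add_2_eq_Suc')
  moreover have "fvn V A \<le> card (F \<inter> V)" using fvn_le_card[OF is_fvs_restrict[OF F]] .
  ultimately show False using card_F by linarith
qed

lemma minimal_bad_set_r1_r2:
  assumes "bad_set V A R"
  shows "minimal_bad_set V' A' {r1, r2}"
  unfolding minimal_bad_set_def
proof (intro conjI allI impI)
  show "bad_set V' A' {r1, r2}" using bad_set_r1_r2[OF assms] .
next
  fix S
  assume "S \<subset> {r1, r2}"
  obtain F where F: "is_min_fvs V A F" using ex_min_fvs[OF is_fvs_whole[OF arcs_in_V]] .
  have "S \<subseteq> insert r1 F \<or> S \<subseteq> insert r2 F" using \<open>S \<subset> {r1, r2}\<close> by blast
  then show "\<not> bad_set V' A' S"
    using min_fvs_insert_r1[OF assms F] min_fvs_insert_r2[OF assms F] unfolding bad_set_def by blast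
qed

end

theorem mainTheorem15:
  fixes V :: "'a set" and A :: "('a \<times> 'a) set" and R :: "'a set" and r1 r2 :: 'a
  assumes "oriented_graph V A"
    and "minimal_bad_set V A R"
    and "r1 \<notin> V" and "r2 \<notin> V" and "r1 \<noteq> r2"
  defines "V' \<equiv> V \<union> {r1, r2}"
    and "A' \<equiv> A \<union> {(r1, r2)} \<union> {(v, r1) | v. v \<in> R} \<union> {(r2, v) | v. v \<in> R}"
  shows "nv V' A' = nv V A + 2 \<and> fvn V' A' = fvn V A + 1 \<and> minimal_bad_set V' A' {r1, r2}"
proof -
  have bad: "bad_set V A R" using assms(2) unfolding minimal_bad_set_def by blast
  interpret gadget V A R r1 r2
    using assms(1,3-5) bad unfolding gadget_def oriented_graph_def bad_set_def by blast
  have "A' = gadget_arcs A R r1 r2" unfolding A'_def gadget_arcs_def ..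
  moreover have "nv V' A' = nv V A + 2"
    unfolding nv_def V'_def using finite_V r1_notin_V r2_notin_V r1_neq_r2 by simp
  ultimately show ?thesis
    using fvn_gadget[OF bad] minimal_bad_set_r1_r2[OF bad] unfolding V'_def by simp
qed

end
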